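(* Let $\mathbb{F}_q$ be a finite field of characteristic $p$, let $r,v,k,t$ be positive integers, and let $f(x):=x^r h_k(x^v)^t$ where $h_k(x):=x^{k-1}+x^{k-2}+\dots+1$. Let $s:=\gcd(v,q-1)$, $d:=(q-1)/s$ and $e:=v/s$. Then $f$ permutes $\mathbb{F}_q$ if and only if all of the following hold: (1) $\gcd(r,s)=\gcd(d,k)=1$; (2) $\gcd(d,2r+vt(k-1))\le 2$; (3) $k^{st}\equiv (-1)^{(d+1)(r+1)}\pmod{p}$; (4) the function $g(x):=x^r\big((1-x^{ek})/(1-x^e)\big)^{st}$ is injective on $\mu_d\setminus\mu_1$; (5) $(-1)^{(d+1)(r+1)}\notin g(\mu_d\setminus\mu_1)$.
   Context: $\mu_n$ denotes the set of $n$-th roots of unity in $\mathbb{F}_q$ (so $\mu_1=\{1\}$). A polynomial permutes $\mathbb{F}_q$ if the induced map $\mathbb{F}_q\to\mathbb{F}_q$ is a bijection. Note $\gcd(d,e)=1$. *)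

theory Defs
  imports Main "HOL-Library.Cardinality" "HOL-Number_Theory.Cong"
begin

definition roots_unity :: "nat \<Rightarrow> 'a::field set" where
  "roots_unity n = {x. x ^ n = 1}"

definition hpoly :: "nat \<Rightarrow> 'a::field \<Rightarrow> 'a" where
  "hpoly k x = (\<Sum>i<k. x ^ i)"

end

theory Submission
  imports Defs "HOL-Algebra.Multiplicative_Group" "HOL-Algebra.Algebraic_Closure_Type"
begin

text \<open>
  Write v = s e, so that f(x) = x^r H(x^s) with H(y) = h_k(y^e)^t. As x \<mapsto> x^s maps the
  nonzero elements onto \<mu>_d with fibres the cosets of \<mu>_s, f permutes the field iff gcd(r,s) = 1,
  H has no zero on \<mu>_d, and \<phi>(y) = y^r H(y)^s is injective on \<mu>_d. Since gcd(e,d) = 1, H has no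
  zero on \<mu>_d iff k \<noteq> 0 in the field and gcd(d,k) = 1; moreover \<phi> = g on \<mu>_d - {1} and
  \<phi>(1) = k^(st). When \<phi> permutes \<mu>_d, comparing the product (-1)^(d+1) of all elements of \<mu>_d
  with the product of their images (using that the values h_k(y), y \<in> \<mu>_d, multiply to k) forces
  k^(st) = (-1)^((d+1)(r+1)); and \<phi>(z\<inverse>) = \<phi>(z) for z of order gcd(d, 2r + vt(k-1)) forces
  this order to be at most 2.
\<close>

lemma power_eq_1_if_coprime:
  fixes x :: "'a::monoid_mult"
  assumes "coprime a b" "x ^ a = 1" "x ^ b = 1"
  shows "x = 1"
proof (cases "a = 0")
  case True
  then show ?thesis using assms(1,3) by simp
next
  case False
  then obtain u v where "a * u = b * v + gcd a b" using bezout_nat by blast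
  then have "x ^ (a * u) = x ^ (b * v) * x" using assms(1) by (simp add: power_add power_commutes)
  then show ?thesis using assms(2,3) by (simp add: power_mult)
qed

lemma bij_betw_power_roots_unity:
  assumes "coprime a n" "n > 0"
  shows "bij_betw (\<lambda>y::'a::{finite,field}. y ^ a) (roots_unity n) (roots_unity n)"
proof -
  have maps: "(\<lambda>y. y ^ a) ` roots_unity n \<subseteq> (roots_unity n :: 'a set)"
    by (auto simp: roots_unity_def) (metis mult.commute power_mult power_one)
  have "inj_on (\<lambda>y::'a. y ^ a) (roots_unity n)"
  proof (rule inj_onI)
    fix y z :: 'a
    assume y: "y \<in> roots_unity n" and z: "z \<in> roots_unity n" and eq: "y ^ a = z ^ a"
    have "z \<noteq> 0" using z assms(2) by (auto simp: roots_unity_def power_0_left)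
    moreover have "(y / z) ^ a = 1" "(y / z) ^ n = 1"
      using eq y z \<open>z \<noteq> 0\<close> by (simp_all add: power_divide roots_unity_def)
    ultimately show "y = z"
      using power_eq_1_if_coprime[OF assms(1), of "y / z"] by simp
  qed
  with maps show ?thesis
    by (simp add: bij_betw_def endo_inj_surj)
qed

lemma finite_field_generator:
  obtains \<gamma> :: "'a::{finite,field}"
  where "\<And>n. \<gamma> ^ n = 1 \<longleftrightarrow> CARD('a) - 1 dvd n" and "\<And>x. x \<noteq> 0 \<Longrightarrow> \<exists>i. x = \<gamma> ^ i"
proof -
  define R where "R = (ring_of_type_algebra :: 'a ring)"
  define G where "G = Multiplicative_Group.mult_of R"
  interpret R: field R unfolding R_def by (rule field_from_type_algebra)
  interpret G: group G unfolding G_def by (rule R.field_mult_group)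
  have pow_R: "x [^]\<^bsub>R\<^esub> n = x ^ n" for x :: 'a and n :: nat
    by (induct n) (simp_all add: R_def ring_of_type_algebra_def mult.commute)
  have pow_G: "x [^]\<^bsub>G\<^esub> n = x ^ n" for x :: 'a and n :: nat
    by (simp add: G_def Multiplicative_Group.nat_pow_mult_of pow_R)
  have one_G: "\<one>\<^bsub>G\<^esub> = 1"
    by (simp add: G_def R_def ring_of_type_algebra_def)
  have carrier: "carrier G = UNIV - {0}"
    by (simp add: G_def R_def ring_of_type_algebra_def)
  obtain \<gamma> where \<gamma>: "\<gamma> \<in> carrier G" and gen: "carrier G = {\<gamma> ^ i | i::nat. i \<in> UNIV}"
    using R.finite_field_mult_group_has_gen unfolding pow_R G_def[symmetric]
    by (simp add: carrier) blast
  have "G.ord \<gamma> \<noteq> 0"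
    using G.ord_ge_1[OF _ \<gamma>] by (simp add: carrier)
  then have "generate G {\<gamma>} = carrier G"
    using G.generate_pow_nat[OF \<gamma> \<open>G.ord \<gamma> \<noteq> 0\<close>] gen unfolding pow_G by simp
  then have "G.ord \<gamma> = card (carrier G)"
    using G.generate_pow_card[OF \<gamma>] by simp
  also have "\<dots> = CARD('a) - 1"
    by (simp add: carrier card_Diff_singleton)
  finally have "\<gamma> ^ n = 1 \<longleftrightarrow> CARD('a) - 1 dvd n" for n
    using G.pow_eq_id[OF \<gamma>, of n] by (simp add: pow_G one_G)
  moreover have "\<exists>i. x = \<gamma> ^ i" if "x \<noteq> 0" for x
    using that gen by (simp add: carrier) blast
  ultimately show thesis using that by blast
qed

lemma card_minus_1_pos: "CARD('a::{finite,field}) - 1 > 0"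
proof -
  have "card {0::'a, 1} \<le> CARD('a)" by (rule card_mono) auto
  then show ?thesis by simp
qed

lemma power_card_minus_1:
  fixes x :: "'a::{finite,field}"
  assumes "x \<noteq> 0"
  shows "x ^ (CARD('a) - 1) = 1"
proof -
  obtain \<gamma> :: 'a where order: "\<And>n. \<gamma> ^ n = 1 \<longleftrightarrow> CARD('a) - 1 dvd n"
    and gen: "\<And>x. x \<noteq> 0 \<Longrightarrow> \<exists>i. x = \<gamma> ^ i"
    using finite_field_generator by blast
  obtain i where "x = \<gamma> ^ i" using gen assms by blast
  then show ?thesis
    using order[of "i * (CARD('a) - 1)"] by (simp add: power_mult mult.commute flip: power_mult)
qed

lemma power_mod_eq_if_power_eq_1:
  fixes x :: "'a::monoid_mult"
  assumes "x ^ d = 1"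
  shows "x ^ (n mod d) = x ^ n"
proof -
  have "x ^ n = (x ^ d) ^ (n div d) * x ^ (n mod d)"
    by (simp flip: power_mult power_add)
  then show ?thesis using assms by simp
qed

lemma roots_unity_cyclic:
  assumes "d dvd CARD('a) - 1"
  obtains z :: "'a::{finite,field}"
  where "\<And>n. z ^ n = 1 \<longleftrightarrow> d dvd n" and "bij_betw (\<lambda>j. z ^ j) {..<d} (roots_unity d)"
proof -
  obtain \<gamma> :: 'a where \<gamma>: "\<And>n. \<gamma> ^ n = 1 \<longleftrightarrow> CARD('a) - 1 dvd n"
    and gen: "\<And>x. x \<noteq> 0 \<Longrightarrow> \<exists>i. x = \<gamma> ^ i"
    using finite_field_generator by blast
  obtain c where dc: "CARD('a) - 1 = d * c" using assms by blast
  then have "c > 0" "d > 0" using card_minus_1_pos[where 'a='a] by auto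
  define z where "z = \<gamma> ^ c"
  have order: "z ^ n = 1 \<longleftrightarrow> d dvd n" for n
    unfolding z_def power_mult[symmetric] \<gamma> dc using \<open>c > 0\<close> by (simp add: mult.commute)
  have "z \<noteq> 0" using order[of d] \<open>d > 0\<close> by (auto simp: power_0_left)
  have "i = j" if "i \<le> j" "j < d" "z ^ i = z ^ j" for i j
  proof -
    have "z ^ i * z ^ (j - i) = z ^ i * 1"
      using that by (simp add: that(3)[symmetric] flip: power_add)
    then have "d dvd j - i" using order \<open>z \<noteq> 0\<close> by simp
    moreover have "j - i < d" using that by simp
    ultimately show "i = j" using \<open>i \<le> j\<close> nat_dvd_not_less[of "j - i" d] by auto
  qed
  then have inj: "inj_on (\<lambda>j. z ^ j) {..<d}"
    by (intro inj_onI) (metis lessThan_iff nat_le_linear)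
  have "roots_unity d = (\<lambda>j. z ^ j) ` {..<d}"
  proof (intro equalityI subsetI)
    fix y :: 'a assume "y \<in> roots_unity d"
    then have y: "y ^ d = 1" by (simp add: roots_unity_def)
    then have "y \<noteq> 0" using \<open>d > 0\<close> by (auto simp: power_0_left)
    then obtain i where i: "y = \<gamma> ^ i" using gen by blast
    then have "d * c dvd d * i" using y unfolding dc[symmetric] \<gamma>[symmetric]
      by (simp add: mult.commute flip: power_mult)
    then obtain m where "i = c * m" using \<open>d > 0\<close> by (auto simp: nat_mult_dvd_cancel1)
    then have "y = z ^ (m mod d)"
      using i power_mod_eq_if_power_eq_1[of z d m] order[of d] by (simp add: z_def power_mult)
    then show "y \<in> (\<lambda>j. z ^ j) ` {..<d}" using \<open>d > 0\<close> by simp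
  next
    fix y assume "y \<in> (\<lambda>j. z ^ j) ` {..<d}"
    then show "y \<in> roots_unity d"
      using order[of "d * _"] by (auto simp: roots_unity_def mult.commute simp flip: power_mult)
  qed
  with inj order show thesis using that[of z] by (simp add: bij_betw_def)
qed

lemma roots_unity_eq_image_power:
  assumes "s * d = CARD('a::{finite,field}) - 1"
  shows "roots_unity d = (\<lambda>x::'a. x ^ s) ` (UNIV - {0})"
proof (intro equalityI subsetI)
  fix y :: 'a assume "y \<in> roots_unity d"
  then have y: "y ^ d = 1" by (simp add: roots_unity_def)
  obtain \<gamma> :: 'a where \<gamma>: "\<And>n. \<gamma> ^ n = 1 \<longleftrightarrow> CARD('a) - 1 dvd n"
    and gen: "\<And>x. x \<noteq> 0 \<Longrightarrow> \<exists>i. x = \<gamma> ^ i"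
    using finite_field_generator by blast
  have "s * d > 0" using assms card_minus_1_pos[where 'a='a] by simp
  then have "d > 0" "s > 0" by auto
  then have "y \<noteq> 0" using y by (auto simp: power_0_left)
  then obtain i where i: "y = \<gamma> ^ i" using gen by blast
  then have "d * s dvd d * i" using y unfolding mult.commute[of d s] assms \<gamma>[symmetric]
    by (simp add: mult.commute flip: power_mult)
  then obtain m where "i = s * m" using \<open>d > 0\<close> by (auto simp: nat_mult_dvd_cancel1)
  then have "y = (\<gamma> ^ m) ^ s" using i by (simp add: power_mult mult.commute flip: power_mult)
  moreover have "\<gamma> ^ m \<noteq> 0" using \<open>y \<noteq> 0\<close> \<open>s > 0\<close> calculation by auto
  ultimately show "y \<in> (\<lambda>x. x ^ s) ` (UNIV - {0})" by blast
next
  fix y assume "y \<in> (\<lambda>x::'a. x ^ s) ` (UNIV - {0})"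
  then obtain x :: 'a where "x \<noteq> 0" "y = x ^ s" by blast
  then show "y \<in> roots_unity d"
    using power_card_minus_1[of x] assms by (simp add: roots_unity_def flip: power_mult)
qed

lemma prod_roots_unity:
  assumes "d dvd CARD('a::{finite,field}) - 1"
  shows "\<Prod>(roots_unity d :: 'a set) = (-1) ^ (d + 1)"
proof -
  obtain z :: 'a where order: "\<And>n. z ^ n = 1 \<longleftrightarrow> d dvd n"
    and bij: "bij_betw (\<lambda>j. z ^ j) {..<d} (roots_unity d)"
    using roots_unity_cyclic assms by blast
  have "d > 0" using assms card_minus_1_pos[where 'a='a] by (cases d) auto
  have gauss: "2 * (\<Sum>j<n. j) = n * (n - 1)" for n :: nat
  proof (induct n)
    case (Suc n)
    then show ?case by (cases n) (simp_all add: algebra_simps)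
  qed simp
  have "\<Prod>(roots_unity d) = (\<Prod>j<d. z ^ j)"
    using prod.reindex_bij_betw[OF bij, of id] by simp
  also have "\<dots> = z ^ (\<Sum>j<d. j)" by (simp add: power_sum)
  finally have prod: "\<Prod>(roots_unity d) = z ^ (\<Sum>j<d. j)" .
  show ?thesis
  proof (cases "even d")
    case True
    then obtain m where m: "d = 2 * m" by blast
    have "(z ^ m) ^ 2 = 1" "z ^ m \<noteq> 1"
      using order[of "m * 2"] order[of m] m \<open>d > 0\<close> by (auto simp flip: power_mult)
    then have "z ^ m = -1" by (simp add: power2_eq_1_iff)
    moreover have "(\<Sum>j<d. j) = m * (2 * m - 1)" using gauss[of d] m by simp
    ultimately show ?thesis
      using prod m \<open>d > 0\<close> by (simp add: power_mult power_minus_odd)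
  next
    case False
    then obtain m where m: "d = 2 * m + 1" using oddE by blast
    have "(\<Sum>j<d. j) = d * m" using gauss[of d] m by simp
    then show ?thesis using prod order[of "d * m"] False by simp
  qed
qed

lemma hpoly_1: "hpoly k 1 = of_nat k"
  by (simp add: hpoly_def)

lemma hpoly_eq_geometric: "y \<noteq> 1 \<Longrightarrow> hpoly k y = (1 - y ^ k) / (1 - y)"
  by (simp add: hpoly_def sum_gp_strict)

lemma hpoly_inverse:
  assumes "z \<noteq> 0" "k > 0"
  shows "hpoly k (inverse z) = inverse z ^ (k - 1) * hpoly k z"
proof -
  have "inverse z ^ (k - 1) * hpoly k z = (\<Sum>i<k. inverse z ^ (k - 1) * z ^ i)"
    by (simp add: hpoly_def sum_distrib_left)
  also have "\<dots> = (\<Sum>i<k. inverse z ^ (k - 1) * z ^ (k - Suc i))"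
    by (rule sum.nat_diff_reindex[symmetric])
  also have "\<dots> = (\<Sum>i<k. inverse z ^ i)"
  proof (rule sum.cong)
    fix i assume "i \<in> {..<k}"
    then have "inverse z ^ (k - 1) * z ^ (k - Suc i)
        = inverse z ^ i * (inverse z ^ (k - Suc i) * z ^ (k - Suc i))"
      by (simp add: mult.assoc flip: power_add)
    also have "\<dots> = inverse z ^ i" using assms(1) by (simp flip: power_mult_distrib)
    finally show "inverse z ^ (k - 1) * z ^ (k - Suc i) = inverse z ^ i" .
  qed simp
  finally show ?thesis by (simp add: hpoly_def)
qed

lemma prod_hpoly_roots_unity:
  assumes "coprime d k" "d > 0"
  shows "(\<Prod>y\<in>roots_unity d. hpoly k y) = (of_nat k :: 'a::{finite,field})"
proof -
  define A where "A = roots_unity d - {1::'a}"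
  have "bij_betw (\<lambda>y. y ^ k) A A"
    unfolding A_def
  proof (rule bij_betw_DiffI)
    show "bij_betw (\<lambda>y::'a. y ^ k) (roots_unity d) (roots_unity d)"
      using assms by (simp add: bij_betw_power_roots_unity coprime_commute)
  qed (auto simp: roots_unity_def)
  then have "(\<Prod>y\<in>A. 1 - y) = (\<Prod>y\<in>A. 1 - y ^ k)"
    by (rule prod.reindex_bij_betw[symmetric])
  also have "\<dots> = (\<Prod>y\<in>A. hpoly k y) * (\<Prod>y\<in>A. 1 - y)"
    unfolding prod.distrib[symmetric] by (rule prod.cong) (auto simp: A_def hpoly_eq_geometric)
  finally have "(\<Prod>y\<in>A. hpoly k y) = 1"
    by (metis mult_cancel_right2 A_def Diff_iff finite prod_zero_iff right_minus_eq singletonI)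
  moreover have "roots_unity d = insert 1 A" "1 \<notin> A" by (auto simp: A_def roots_unity_def)
  ultimately show ?thesis by (simp add: hpoly_1)
qed

locale power_mult_comp_power =
  fixes f H :: "'a::{finite,field} \<Rightarrow> 'a" and r s d :: nat
  assumes card_eq: "s * d = CARD('a) - 1"
    and r_pos: "r > 0"
    and f_eq: "\<And>x. f x = x ^ r * H (x ^ s)"
begin

lemma s_pos: "s > 0"
proof -
  have "s * d > 0" using card_eq card_minus_1_pos[where 'a='a] by simp
  then show ?thesis by simp
qed

lemma f_0: "f 0 = 0"
  using r_pos by (simp add: f_eq)

lemma power_f: "f x ^ s = (x ^ s) ^ r * H (x ^ s) ^ s"
  by (simp add: f_eq power_mult_distrib mult_ac flip: power_mult)

lemma f_mult_root: "w ^ s = 1 \<Longrightarrow> f (w * x) = w ^ r * f x"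
  by (simp add: f_eq power_mult_distrib mult_ac)

lemma nonzero_if_inj:
  assumes "inj f" "y \<in> roots_unity d"
  shows "H y \<noteq> 0"
proof
  assume "H y = 0"
  obtain x where "x \<noteq> 0" "y = x ^ s"
    using assms(2) roots_unity_eq_image_power[OF card_eq] by auto
  then have "f x = f 0" using \<open>H y = 0\<close> f_0 by (simp add: f_eq)
  with \<open>x \<noteq> 0\<close> show False using assms(1) by (auto dest: injD)
qed

lemma coprime_if_inj:
  assumes "inj f"
  shows "coprime r s"
proof (rule ccontr)
  assume "\<not> coprime r s"
  then have "gcd r s \<noteq> 1" by (simp add: coprime_iff_gcd_eq_1)
  have "gcd r s dvd CARD('a) - 1" using card_eq by (metis dvd_mult2 gcd_dvd2)
  then obtain z :: 'a where order: "\<And>n. z ^ n = 1 \<longleftrightarrow> gcd r s dvd n"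
    using roots_unity_cyclic by blast
  have "z \<noteq> 1" using order[of 1] \<open>gcd r s \<noteq> 1\<close> by auto
  moreover have "f z = f 1" using order[of r] order[of s] by (simp add: f_eq)
  ultimately show False using assms by (auto dest: injD)
qed

lemma inj_on_roots_unity_if_inj:
  assumes "inj f"
  shows "inj_on (\<lambda>y. y ^ r * H y ^ s) (roots_unity d)"
proof (rule inj_onI)
  fix y1 y2 assume "y1 \<in> roots_unity d" "y2 \<in> roots_unity d"
    and eq: "y1 ^ r * H y1 ^ s = y2 ^ r * H y2 ^ s"
  then obtain x1 x2 where x: "x1 \<noteq> 0" "y1 = x1 ^ s" "x2 \<noteq> 0" "y2 = x2 ^ s"
    using roots_unity_eq_image_power[OF card_eq] by auto
  have "f x2 \<noteq> 0" using nonzero_if_inj[OF assms \<open>y2 \<in> _\<close>] x by (simp add: f_eq)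
  have "f x1 ^ s = f x2 ^ s" using eq x by (simp add: power_f)
  define w where "w = f x1 / f x2"
  have "w \<in> roots_unity s"
    using \<open>f x1 ^ s = f x2 ^ s\<close> \<open>f x2 \<noteq> 0\<close> by (simp add: w_def roots_unity_def power_divide)
  then obtain \<omega> where \<omega>: "\<omega> \<in> roots_unity s" "w = \<omega> ^ r"
    using bij_betw_power_roots_unity[OF coprime_if_inj[OF assms] s_pos]
    by (auto simp: bij_betw_def)
  then have "f (\<omega> * x2) = f x1"
    using f_mult_root \<open>f x2 \<noteq> 0\<close> by (simp add: roots_unity_def w_def field_simps)
  then have "x1 = \<omega> * x2" using assms by (auto dest: injD)
  then show "y1 = y2" using x \<omega>(1) by (simp add: roots_unity_def power_mult_distrib)
qed

lemma inj_if_inj_on_roots_unity: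
  assumes "coprime r s" "\<forall>y\<in>roots_unity d. H y \<noteq> 0"
    and inj: "inj_on (\<lambda>y. y ^ r * H y ^ s) (roots_unity d)"
  shows "inj f"
proof (rule injI)
  have power_s: "x ^ s \<in> roots_unity d" if "x \<noteq> 0" for x :: 'a
    using that roots_unity_eq_image_power[OF card_eq] by blast
  have f_nonzero: "f x \<noteq> 0" if "x \<noteq> 0" for x :: 'a
    using that assms(2) power_s[OF that] by (simp add: f_eq)
  fix x1 x2 :: 'a assume eq: "f x1 = f x2"
  show "x1 = x2"
  proof (cases "x1 = 0 \<or> x2 = 0")
    case True
    then show ?thesis using eq f_0 f_nonzero by metis
  next
    case False
    then have "x1 ^ s = x2 ^ s"
      using inj power_s eq power_f[of x1] power_f[of x2] by (auto dest: inj_onD)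
    then have "(x1 / x2) ^ s = 1" "f x1 = (x1 / x2) ^ r * f x2"
      using False f_mult_root[of "x1 / x2" x2] by (simp_all add: power_divide)
    then have "(x1 / x2) ^ r = 1" using eq f_nonzero False by simp
    then have "x1 / x2 = 1"
      using power_eq_1_if_coprime[OF assms(1)] \<open>(x1 / x2) ^ s = 1\<close> by blast
    then show ?thesis using False by simp
  qed
qed

lemma inj_iff:
  "inj f \<longleftrightarrow> coprime r s \<and> (\<forall>y\<in>roots_unity d. H y \<noteq> 0)
     \<and> inj_on (\<lambda>y. y ^ r * H y ^ s) (roots_unity d)"
  using coprime_if_inj nonzero_if_inj inj_on_roots_unity_if_inj inj_if_inj_on_roots_unity by blast

end

lemma hpoly_power_nonzero_on_roots_unity_iff:
  assumes "d dvd CARD('a::{finite,field}) - 1" "coprime e d"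
  shows "(\<forall>y\<in>roots_unity d. hpoly k (y ^ e) \<noteq> (0::'a)) \<longleftrightarrow> of_nat k \<noteq> (0::'a) \<and> coprime d k"
proof
  assume nonzero: "\<forall>y\<in>roots_unity d. hpoly k (y ^ e) \<noteq> (0::'a)"
  then have "of_nat k \<noteq> (0::'a)"
    using bspec[OF nonzero, of 1] by (simp add: roots_unity_def hpoly_1)
  moreover have "coprime d k"
  proof (rule ccontr)
    assume "\<not> coprime d k"
    then have "gcd d k \<noteq> 1" by (simp add: coprime_iff_gcd_eq_1)
    have "gcd d k dvd CARD('a) - 1" using assms(1) by (rule dvd_trans[OF gcd_dvd1])
    then obtain z :: 'a where order: "\<And>n. z ^ n = 1 \<longleftrightarrow> gcd d k dvd n"
      using roots_unity_cyclic by blast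
    have "z \<in> roots_unity d" "z \<noteq> 1"
      using order[of d] order[of 1] \<open>gcd d k \<noteq> 1\<close> by (auto simp: roots_unity_def)
    then have "z ^ e \<noteq> 1"
      using power_eq_1_if_coprime[OF assms(2)] by (auto simp: roots_unity_def)
    moreover have "(z ^ e) ^ k = 1" using order[of "e * k"] by (simp flip: power_mult)
    ultimately have "hpoly k (z ^ e) = 0" by (simp add: hpoly_eq_geometric)
    with \<open>z \<in> roots_unity d\<close> nonzero show False by blast
  qed
  ultimately show "of_nat k \<noteq> (0::'a) \<and> coprime d k" ..
next
  assume k: "of_nat k \<noteq> (0::'a) \<and> coprime d k"
  show "\<forall>y\<in>roots_unity d. hpoly k (y ^ e) \<noteq> (0::'a)"
  proof
    fix y :: 'a assume y: "y \<in> roots_unity d"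
    show "hpoly k (y ^ e) \<noteq> 0"
    proof (cases "y = 1")
      case True
      then show ?thesis using k by (simp add: hpoly_1)
    next
      case False
      have "coprime (e * k) d" using assms(2) k by (simp add: coprime_commute)
      then have "y ^ e \<noteq> 1" "(y ^ e) ^ k \<noteq> 1"
        using power_eq_1_if_coprime[OF assms(2), of y]
          power_eq_1_if_coprime[OF \<open>coprime (e * k) d\<close>, of y] False y by (auto simp: roots_unity_def simp flip: power_mult)
      then show ?thesis by (simp add: hpoly_eq_geometric)
    qed
  qed
qed

lemma of_nat_power_eq_if_inj_on_roots_unity:
  assumes card_eq: "s * d = CARD('a::{finite,field}) - 1"
    and "coprime e d" "coprime d k" "of_nat k \<noteq> (0::'a)"
    and inj: "inj_on (\<lambda>y. y ^ r * hpoly k (y ^ e) ^ (s * t)) (roots_unity d :: 'a set)"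
  shows "(of_nat k :: 'a) ^ (s * t) = (-1) ^ ((d + 1) * (r + 1))"
proof -
  define \<phi> where "\<phi> = (\<lambda>y::'a. y ^ r * hpoly k (y ^ e) ^ (s * t))"
  define \<sigma> :: 'a where "\<sigma> = (-1) ^ (d + 1)"
  have "d dvd CARD('a) - 1" using card_eq by (metis dvd_triv_right)
  have "d > 0" using card_eq card_minus_1_pos[where 'a='a] by (cases d) auto
  have nonzero: "\<forall>y\<in>roots_unity d. hpoly k (y ^ e) \<noteq> (0::'a)"
    using hpoly_power_nonzero_on_roots_unity_iff[OF \<open>d dvd _\<close> assms(2)] assms(3,4) by blast
  have "\<phi> ` roots_unity d \<subseteq> roots_unity d"
  proof
    fix z assume "z \<in> \<phi> ` roots_unity d"
    then obtain y where y: "y \<in> roots_unity d" "z = \<phi> y" by blast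
    have "z ^ d = (y ^ d) ^ r * (hpoly k (y ^ e) ^ (CARD('a) - 1)) ^ t"
      unfolding y(2) \<phi>_def card_eq[symmetric] by (simp add: power_mult_distrib mult_ac flip: power_mult)
    also have "\<dots> = 1"
      using y nonzero power_card_minus_1[of "hpoly k (y ^ e)"] by (simp add: roots_unity_def)
    finally show "z \<in> roots_unity d" by (simp add: roots_unity_def)
  qed
  then have "\<phi> ` roots_unity d = roots_unity d"
    using inj by (simp add: endo_inj_surj \<phi>_def)
  then have "\<Prod>(roots_unity d) = (\<Prod>y\<in>roots_unity d. \<phi> y)"
    using prod.reindex[OF inj[folded \<phi>_def], of id] by simp
  also have "\<dots> = \<Prod>(roots_unity d) ^ r * (\<Prod>y\<in>roots_unity d. hpoly k (y ^ e)) ^ (s * t)"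
    by (simp add: \<phi>_def prod.distrib prod_power_distrib)
  also have "(\<Prod>y\<in>roots_unity d. hpoly k (y ^ e)) = (\<Prod>y\<in>roots_unity d. hpoly k y :: 'a)"
    using prod.reindex_bij_betw[OF bij_betw_power_roots_unity[OF assms(2) \<open>d > 0\<close>], of "hpoly k"] by simp
  also have "\<dots> = of_nat k" using prod_hpoly_roots_unity assms(3) \<open>d > 0\<close> by blast
  finally have prod_eq: "\<sigma> = \<sigma> ^ r * of_nat k ^ (s * t)"
    using prod_roots_unity[OF \<open>d dvd _\<close>] by (simp add: \<sigma>_def)
  have "\<sigma> * \<sigma> = 1" by (simp add: \<sigma>_def flip: power_mult_distrib)
  then have "of_nat k ^ (s * t) = \<sigma> ^ r * (\<sigma> ^ r * of_nat k ^ (s * t))"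
    by (simp add: mult.assoc flip: power_mult_distrib)
  also have "\<dots> = \<sigma> ^ (r + 1)" by (simp flip: prod_eq)
  also have "\<dots> = (-1) ^ ((d + 1) * (r + 1))" by (simp only: \<sigma>_def power_mult)
  finally show ?thesis .
qed

lemma gcd_le_2_if_inj_on_roots_unity:
  assumes "d dvd CARD('a::{finite,field}) - 1" "k > 0"
    and inj: "inj_on (\<lambda>y. y ^ r * hpoly k (y ^ e) ^ m) (roots_unity d :: 'a set)"
  shows "gcd d (2 * r + e * m * (k - 1)) \<le> 2"
proof (rule ccontr)
  define u where "u = e * m * (k - 1)"
  define c where "c = gcd d (2 * r + u)"
  assume "\<not> gcd d (2 * r + e * m * (k - 1)) \<le> 2"
  then have "c > 2" by (simp add: c_def u_def)
  have "c dvd CARD('a) - 1" using assms(1) unfolding c_def by (rule dvd_trans[OF gcd_dvd1])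
  then obtain z :: 'a where order: "\<And>n. z ^ n = 1 \<longleftrightarrow> c dvd n"
    using roots_unity_cyclic by blast
  have "z \<noteq> 0" using order[of c] \<open>c > 2\<close> by (auto simp: power_0_left)
  have roots: "z \<in> roots_unity d" "inverse z \<in> roots_unity d"
    using order[of d] by (auto simp: c_def roots_unity_def power_inverse)
  have "z ^ (2 * r + u) = 1" using order by (simp add: c_def)
  moreover have "z ^ (r + u) * z ^ r = z ^ (2 * r + u)"
    by (simp add: mult_2 add_ac flip: power_add)
  ultimately have "z ^ (r + u) * z ^ r = 1" by simp
  then have inv: "inverse z ^ (r + u) = z ^ r"
    by (simp add: power_inverse inverse_unique)
  txt \<open>By the self-reciprocity of h_k and z^(2r+u) = 1, the map takes equal values at z and z\<inverse>.\<close>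
  have "inverse z ^ r * hpoly k (inverse z ^ e) ^ m
      = inverse z ^ r * (inverse z ^ (e * (k - 1)) * hpoly k (z ^ e)) ^ m"
    using hpoly_inverse[of "z ^ e" k] \<open>z \<noteq> 0\<close> assms(2) by (simp add: power_inverse power_mult)
  also have "\<dots> = inverse z ^ (r + u) * hpoly k (z ^ e) ^ m"
    by (simp add: u_def power_add power_mult_distrib mult_ac flip: power_mult)
  also have "\<dots> = z ^ r * hpoly k (z ^ e) ^ m" by (simp add: inv)
  finally have "inverse z = z" using inj_onD[OF inj _ roots(2,1)] by simp
  then have "c dvd 2" using order[of 2] \<open>z \<noteq> 0\<close> by (metis power2_eq_square right_inverse)
  with \<open>c > 2\<close> show False by (simp add: nat_dvd_not_less)
qed

lemma bij_iff_inj_on_roots_unity: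
  fixes f :: "'a::{finite,field} \<Rightarrow> 'a"
  assumes card_eq: "s * d = CARD('a) - 1" and "coprime e d" "r > 0" "t > 0"
    and f_eq: "\<And>x. f x = x ^ r * hpoly k (x ^ (s * e)) ^ t"
  shows "bij f \<longleftrightarrow> coprime r s \<and> coprime d k \<and> of_nat k \<noteq> (0::'a)
    \<and> inj_on (\<lambda>y. y ^ r * hpoly k (y ^ e) ^ (s * t)) (roots_unity d :: 'a set)"
proof -
  interpret power_mult_comp_power f "\<lambda>y. hpoly k (y ^ e) ^ t" r s d
    using assms by unfold_locales (simp_all add: power_mult)
  have "d dvd CARD('a) - 1" using card_eq by (metis dvd_triv_right)
  have "bij f \<longleftrightarrow> inj f"
    using finite_UNIV_inj_surj[of f] by (auto simp: bij_def)
  also have "\<dots> \<longleftrightarrow> coprime r s \<and> coprime d k \<and> of_nat k \<noteq> (0::'a)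
    \<and> inj_on (\<lambda>y. y ^ r * hpoly k (y ^ e) ^ (s * t)) (roots_unity d :: 'a set)"
  proof -
    have "(\<forall>y\<in>roots_unity d. hpoly k (y ^ e) ^ t \<noteq> (0::'a))
        \<longleftrightarrow> (\<forall>y\<in>roots_unity d. hpoly k (y ^ e) \<noteq> (0::'a))"
      using \<open>t > 0\<close> by simp
    also have "\<dots> \<longleftrightarrow> of_nat k \<noteq> (0::'a) \<and> coprime d k"
      by (rule hpoly_power_nonzero_on_roots_unity_iff[OF \<open>d dvd _\<close> \<open>coprime e d\<close>])
    moreover have "(\<lambda>y::'a. y ^ r * (hpoly k (y ^ e) ^ t) ^ s)
        = (\<lambda>y. y ^ r * hpoly k (y ^ e) ^ (s * t))"
      by (simp add: mult.commute flip: power_mult)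
    ultimately show ?thesis unfolding inj_iff by (simp only:) blast
  qed
  finally show ?thesis .
qed

lemma inj_on_roots_unity_iff:
  fixes g :: "'a::field \<Rightarrow> 'a"
  assumes "coprime e d"
    and g_eq: "\<And>x. g x = x ^ r * ((1 - x ^ (e * k)) / (1 - x ^ e)) ^ m"
  shows "inj_on (\<lambda>y. y ^ r * hpoly k (y ^ e) ^ m) (roots_unity d :: 'a set)
    \<longleftrightarrow> inj_on g (roots_unity d - roots_unity 1)
      \<and> of_nat k ^ m \<notin> g ` (roots_unity d - roots_unity 1)"
proof -
  define \<phi> where "\<phi> = (\<lambda>y::'a. y ^ r * hpoly k (y ^ e) ^ m)"
  define A where "A = roots_unity d - {1::'a}"
  have "roots_unity 1 = {1::'a}" "1 \<notin> A" by (simp_all add: A_def roots_unity_def)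
  have on_A: "\<phi> y = g y" if "y \<in> A" for y
  proof -
    have "y ^ e \<noteq> 1"
      using that power_eq_1_if_coprime[OF assms(1), of y] by (auto simp: A_def roots_unity_def)
    then show ?thesis by (simp add: \<phi>_def g_eq hpoly_eq_geometric power_mult)
  qed
  have "inj_on \<phi> (roots_unity d) \<longleftrightarrow> inj_on \<phi> (insert 1 A)"
    by (simp add: A_def roots_unity_def insert_absorb)
  also have "\<dots> \<longleftrightarrow> inj_on \<phi> A \<and> \<phi> 1 \<notin> \<phi> ` A"
    using Diff_insert_absorb[of 1 A] by (simp add: \<open>1 \<notin> A\<close>)
  also have "\<dots> \<longleftrightarrow> inj_on g A \<and> of_nat k ^ m \<notin> g ` A"
  proof -
    have "inj_on \<phi> A = inj_on g A" using on_A by (rule inj_on_cong)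
    moreover have "\<phi> ` A = g ` A" using on_A by (rule image_cong[OF refl])
    moreover have "\<phi> 1 = of_nat k ^ m" by (simp add: \<phi>_def hpoly_1)
    ultimately show ?thesis by simp
  qed
  finally show ?thesis unfolding \<phi>_def A_def \<open>roots_unity 1 = {1}\<close> .
qed

theorem proposition3p2:
  fixes r v k t :: nat
    and f g :: "'a::{finite,field} \<Rightarrow> 'a"
    and p q s d e :: nat
  assumes "r > 0" "v > 0" "k > 0" "t > 0"
    and "q = CARD('a)" "p = CHAR('a)"
    and "\<And>x. f x = x ^ r * (hpoly k (x ^ v)) ^ t"
    and "s = gcd v (q - 1)" "d = (q - 1) div s" "e = v div s"
    and "\<And>x. g x = x ^ r * ((1 - x ^ (e * k)) / (1 - x ^ e)) ^ (s * t)"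
  shows "bij f \<longleftrightarrow>
    (gcd r s = 1 \<and> gcd d k = 1
     \<and> gcd d (2 * r + v * t * (k - 1)) \<le> 2
     \<and> [int k ^ (s * t) = (-1) ^ ((d + 1) * (r + 1))] (mod int p)
     \<and> inj_on g (roots_unity d - roots_unity 1)
     \<and> (-1) ^ ((d + 1) * (r + 1)) \<notin> g ` (roots_unity d - roots_unity 1))"
proof -
  have card_eq: "s * d = CARD('a) - 1" and v_eq: "v = s * e" and "coprime e d"
    using assms(2,5,8-10) by (simp_all add: div_gcd_coprime)
  then have "d dvd CARD('a) - 1" by (metis dvd_triv_right)
  have "f x = x ^ r * hpoly k (x ^ (s * e)) ^ t" for x
    using assms(7) v_eq by simp
  note criterion = bij_iff_inj_on_roots_unity[OF card_eq \<open>coprime e d\<close> assms(1,4) this]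
  define \<epsilon> :: 'a where "\<epsilon> = (-1) ^ ((d + 1) * (r + 1))"
  have sign: "[int k ^ (s * t) = (-1) ^ ((d + 1) * (r + 1))] (mod int p)
      \<longleftrightarrow> of_nat k ^ (s * t) = \<epsilon>"
    unfolding assms(6) \<epsilon>_def of_int_eq_iff_cong_CHAR[symmetric] by simp
  have "s * t > 0" "\<epsilon> \<noteq> 0" using assms(2,4,8) by (simp_all add: \<epsilon>_def)
  have "gcd d (2 * r + v * t * (k - 1)) \<le> 2 \<and> of_nat k ^ (s * t) = \<epsilon>"
    if "coprime d k" "of_nat k \<noteq> (0::'a)"
      "inj_on (\<lambda>y. y ^ r * hpoly k (y ^ e) ^ (s * t)) (roots_unity d :: 'a set)"
    using gcd_le_2_if_inj_on_roots_unity[OF \<open>d dvd _\<close> assms(3) that(3)]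
      of_nat_power_eq_if_inj_on_roots_unity[OF card_eq \<open>coprime e d\<close> that] v_eq
    by (simp add: \<epsilon>_def mult_ac)
  then show ?thesis
    unfolding \<epsilon>_def[symmetric] sign criterion inj_on_roots_unity_iff[OF \<open>coprime e d\<close> assms(11)]
    using \<open>s * t > 0\<close> \<open>\<epsilon> \<noteq> 0\<close> by (auto simp: coprime_iff_gcd_eq_1)
qed

end
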